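(* Let $D$ be a connection on a vector bundle $E$ and let $F\subseteq E$ be a parallel subbundle. If the induced connections on $F$ and on $E/F$ are exact, and the curvature of the induced connection on $E/F$ is injective, then $D$ is exact.
   Context: A subbundle $F$ is parallel if $D(\Gamma(F))\subseteq\Gamma(\Lambda^1\otimes F)$; then $D$ restricts to a connection on $F$ and descends to a connection on $E/F$. For a connection $D$ on $E$: $D^\wedge$ is the exterior covariant derivative $\phi_b{}^\alpha\mapsto D_{[a}\phi_{b]}{}^\alpha$, $\kappa=D^\wedge\circ D:E\to\Lambda^2\otimes E$ the curvature (assumed of constant rank). $D$ is exact if every section $\phi$ of $\Lambda^1\otimes E$ with $D^\wedge\phi=\kappa(\psi)$ for some section $\psi$ of $E$ is of the form $D\eta$ for some section $\eta$ of $E$. Statements are local. *)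

theory Defs
  imports "HOL-Analysis.Analysis"
begin

text \<open>Local setting: base = open set U in R^n (type real^'n), the vector bundle E is the
trivial bundle U x R^k (fibre real^'k).  Sections of E are functions real^'n => real^'k,
E-valued 1-forms are real^'n => real^'k^'n (component phi x $ b), E-valued 2-forms are
real^'n => real^'k^'n^'n (component omega x $ a $ b).\<close>

fun C_k_on :: "nat \<Rightarrow> (real^'n) set \<Rightarrow> (real^'n \<Rightarrow> 'b::euclidean_space) \<Rightarrow> bool" where
  "C_k_on 0 U f = continuous_on U f"
| "C_k_on (Suc k) U f = (f differentiable_on U \<and>
      (\<forall>i\<in>Basis. C_k_on k U (\<lambda>x. frechet_derivative f (at x) i)))"

definition smooth_on :: "(real^'n) set \<Rightarrow> (real^'n \<Rightarrow> 'b::euclidean_space) \<Rightarrow> bool" where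
  "smooth_on U f \<longleftrightarrow> (\<forall>k. C_k_on k U f)"

definition pd :: "'n::finite \<Rightarrow> (real^'n \<Rightarrow> 'b::real_normed_vector) \<Rightarrow> real^'n \<Rightarrow> 'b" where
  "pd a f x = frechet_derivative f (at x) (axis a 1)"

text \<open>A connection D on the trivial bundle is D = d + Gamma, with connection matrices
G x $ a (a k x k matrix for each direction a).\<close>
definition covd :: "(real^'n \<Rightarrow> real^'k^'k^'n) \<Rightarrow> (real^'n \<Rightarrow> real^'k) \<Rightarrow> real^'n \<Rightarrow> real^'k^'n" where
  "covd G \<sigma> x = (\<chi> a. pd a \<sigma> x + (G x $ a) *v \<sigma> x)"

text \<open>Exterior covariant derivative  phi_b \<mapsto> D_[a phi_b]  (antisymmetrisation with factor 1/2).\<close>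
definition extd :: "(real^'n \<Rightarrow> real^'k^'k^'n) \<Rightarrow> (real^'n \<Rightarrow> real^'k^'n) \<Rightarrow> real^'n \<Rightarrow> real^'k^'n^'n" where
  "extd G \<phi> x = (\<chi> a b. (1/2) *\<^sub>R
      ((pd a (\<lambda>y. \<phi> y $ b) x + (G x $ a) *v (\<phi> x $ b))
     - (pd b (\<lambda>y. \<phi> y $ a) x + (G x $ b) *v (\<phi> x $ a))))"

definition curv :: "(real^'n \<Rightarrow> real^'k^'k^'n) \<Rightarrow> (real^'n \<Rightarrow> real^'k) \<Rightarrow> real^'n \<Rightarrow> real^'k^'n^'n" where
  "curv G \<psi> = extd G (covd G \<psi>)"

text \<open>The curvature as a bundle map on the fibre over x (kappa is tensorial, so its value on
v is kappa applied to the section that is constant v in the trivialisation, evaluated at x).\<close>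
definition curv_at :: "(real^'n \<Rightarrow> real^'k^'k^'n) \<Rightarrow> real^'n \<Rightarrow> real^'k \<Rightarrow> real^'k^'n^'n" where
  "curv_at G x v = curv G (\<lambda>_. v) x"

definition connection_on :: "(real^'n) set \<Rightarrow> (real^'n \<Rightarrow> real^'k^'k^'n) \<Rightarrow> bool" where
  "connection_on U G \<longleftrightarrow> smooth_on U G"

definition curv_const_rank :: "(real^'n) set \<Rightarrow> (real^'n \<Rightarrow> real^'k^'k^'n) \<Rightarrow> bool" where
  "curv_const_rank U G \<longleftrightarrow> (\<exists>r. \<forall>x\<in>U. dim (range (curv_at G x)) = r)"

text \<open>Exactness of D (a local statement: local solvability near every point).\<close>
definition exact_on :: "(real^'n) set \<Rightarrow> (real^'n \<Rightarrow> real^'k^'k^'n) \<Rightarrow> bool" where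
  "exact_on U G \<longleftrightarrow>
    (\<forall>V \<phi> \<psi>. open V \<and> V \<subseteq> U \<and> smooth_on V \<phi> \<and> smooth_on V \<psi> \<and>
       (\<forall>x\<in>V. extd G \<phi> x = curv G \<psi> x) \<longrightarrow>
       (\<forall>x\<in>V. \<exists>W \<eta>. open W \<and> x \<in> W \<and> W \<subseteq> V \<and> smooth_on W \<eta> \<and>
          (\<forall>y\<in>W. covd G \<eta> y = \<phi> y)))"

definition subbundle_on :: "(real^'n) set \<Rightarrow> (real^'n \<Rightarrow> (real^'k) set) \<Rightarrow> bool" where
  "subbundle_on U F \<longleftrightarrow>
    (\<forall>x\<in>U. subspace (F x)) \<and> (\<exists>r. \<forall>x\<in>U. dim (F x) = r) \<and>
    (\<forall>x\<in>U. \<exists>W s. open W \<and> x \<in> W \<and> W \<subseteq> U \<and> (\<forall>i::'k. smooth_on W (s i)) \<and>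
        (\<forall>y\<in>W. F y = span (range (\<lambda>i. s i y))))"

definition parallel_on :: "(real^'n) set \<Rightarrow> (real^'n \<Rightarrow> real^'k^'k^'n) \<Rightarrow> (real^'n \<Rightarrow> (real^'k) set) \<Rightarrow> bool" where
  "parallel_on U G F \<longleftrightarrow>
    (\<forall>V \<sigma>. open V \<and> V \<subseteq> U \<and> smooth_on V \<sigma> \<and> (\<forall>y\<in>V. \<sigma> y \<in> F y) \<longrightarrow>
       (\<forall>y\<in>V. \<forall>a. covd G \<sigma> y $ a \<in> F y))"

definition sub_curv_const_rank :: "(real^'n) set \<Rightarrow> (real^'n \<Rightarrow> real^'k^'k^'n) \<Rightarrow> (real^'n \<Rightarrow> (real^'k) set) \<Rightarrow> bool" where
  "sub_curv_const_rank U G F \<longleftrightarrow> (\<exists>r. \<forall>x\<in>U. dim (curv_at G x ` F x) = r)"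

text \<open>Exactness of the induced connection D|_F on F: all sections take values in F.\<close>
definition exact_sub_on :: "(real^'n) set \<Rightarrow> (real^'n \<Rightarrow> real^'k^'k^'n) \<Rightarrow> (real^'n \<Rightarrow> (real^'k) set) \<Rightarrow> bool" where
  "exact_sub_on U G F \<longleftrightarrow>
    (\<forall>V \<phi> \<psi>. open V \<and> V \<subseteq> U \<and> smooth_on V \<phi> \<and> smooth_on V \<psi> \<and>
       (\<forall>y\<in>V. \<forall>b. \<phi> y $ b \<in> F y) \<and> (\<forall>y\<in>V. \<psi> y \<in> F y) \<and>
       (\<forall>x\<in>V. extd G \<phi> x = curv G \<psi> x) \<longrightarrow>
       (\<forall>x\<in>V. \<exists>W \<eta>. open W \<and> x \<in> W \<and> W \<subseteq> V \<and> smooth_on W \<eta> \<and>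
          (\<forall>y\<in>W. \<eta> y \<in> F y) \<and> (\<forall>y\<in>W. covd G \<eta> y = \<phi> y)))"

text \<open>Exactness of the induced connection on E/F: sections of E/F (and of forms with
values in E/F) are represented by smooth lifts to E, equalities hold modulo F.\<close>
definition exact_quot_on :: "(real^'n) set \<Rightarrow> (real^'n \<Rightarrow> real^'k^'k^'n) \<Rightarrow> (real^'n \<Rightarrow> (real^'k) set) \<Rightarrow> bool" where
  "exact_quot_on U G F \<longleftrightarrow>
    (\<forall>V \<phi> \<psi>. open V \<and> V \<subseteq> U \<and> smooth_on V \<phi> \<and> smooth_on V \<psi> \<and>
       (\<forall>x\<in>V. \<forall>a b. extd G \<phi> x $ a $ b - curv G \<psi> x $ a $ b \<in> F x) \<longrightarrow>
       (\<forall>x\<in>V. \<exists>W \<eta>. open W \<and> x \<in> W \<and> W \<subseteq> V \<and> smooth_on W \<eta> \<and>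
          (\<forall>y\<in>W. \<forall>a. covd G \<eta> y $ a - \<phi> y $ a \<in> F y)))"

text \<open>The curvature of the induced connection on E/F is injective (fibrewise):
kappa_{E/F}[v] = [kappa v] = 0 in Lambda^2 (x) E/F implies [v] = 0.\<close>
definition quot_curv_injective_on :: "(real^'n) set \<Rightarrow> (real^'n \<Rightarrow> real^'k^'k^'n) \<Rightarrow> (real^'n \<Rightarrow> (real^'k) set) \<Rightarrow> bool" where
  "quot_curv_injective_on U G F \<longleftrightarrow>
    (\<forall>x\<in>U. \<forall>v. (\<forall>a b. curv_at G x v $ a $ b \<in> F x) \<longrightarrow> v \<in> F x)"

end

theory Submission
  imports Defs
begin

text \<open>Suppose \<open>D\<^sup>\<and>\<phi> = \<kappa>\<psi>\<close>. Exactness on \<open>E/F\<close> gives \<open>\<eta>\<close> with \<open>D\<eta> \<equiv> \<phi>\<close> modulo \<open>F\<close>, so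
  \<open>\<phi>' = \<phi> - D\<eta>\<close> is \<open>F\<close>-valued and \<open>D\<^sup>\<and>\<phi>' = \<kappa>(\<psi> - \<eta>)\<close>. As \<open>F\<close> is parallel, \<open>D\<^sup>\<and>\<phi>'\<close> is
  \<open>F\<close>-valued too, so \<open>\<kappa>(\<psi> - \<eta>)\<close> vanishes modulo \<open>F\<close>; since \<open>\<kappa>\<close> is tensorial and injective
  on \<open>E/F\<close>, \<open>\<psi> - \<eta>\<close> is a section of \<open>F\<close>. Exactness on \<open>F\<close> now yields \<open>\<eta>'\<close> with
  \<open>D\<eta>' = \<phi>'\<close>, and \<open>D(\<eta> + \<eta>') = \<phi>\<close>. In the trivialisation, tensoriality of \<open>\<kappa>\<close> is the
  symmetry of second partial derivatives of smooth functions.\<close>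

section \<open>Smooth functions and partial derivatives\<close>

lemmas has_frechet_derivative = frechet_derivative_works[THEN iffD1]

lemma frechet_derivative_cong_open:
  assumes "open W" "y \<in> W" "\<And>z. z \<in> W \<Longrightarrow> f z = g z"
  shows "frechet_derivative f (at y) = frechet_derivative g (at y)"
proof -
  have "(f has_derivative f') (at y) \<longleftrightarrow> (g has_derivative f') (at y)" for f'
    using has_derivative_transform_within_open[OF _ assms(1,2), of f f' UNIV g]
      has_derivative_transform_within_open[OF _ assms(1,2), of g f' UNIV f] assms(3)
    by auto
  then show ?thesis unfolding frechet_derivative_def by simp
qed

lemma C_k_on_SucD: "C_k_on (Suc k) U f \<Longrightarrow> C_k_on k U f"
  by (induction k arbitrary: f) (simp_all add: differentiable_imp_continuous_on)

lemma C_k_on_subset: "C_k_on k U f \<Longrightarrow> V \<subseteq> U \<Longrightarrow> C_k_on k V f"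
  by (induction k arbitrary: f) (auto intro: continuous_on_subset differentiable_on_subset)

lemma C_k_on_cong:
  assumes "C_k_on k U f" "open U" "\<And>x. x \<in> U \<Longrightarrow> f x = g x"
  shows "C_k_on k U g"
  using assms(1,3)
proof (induction k arbitrary: f g)
  case 0
  then show ?case using continuous_on_cong by (metis C_k_on.simps(1))
next
  case (Suc k)
  have "f differentiable at x" if "x \<in> U" for x
    using Suc.prems(1) assms(2) that by (simp add: differentiable_on_eq_differentiable_at)
  then have "g differentiable at x" if "x \<in> U" for x
    using has_derivative_transform_within_open[OF _ assms(2) that] Suc.prems(2) that
    unfolding differentiable_def by blast
  then have "g differentiable_on U"
    using assms(2) by (simp add: differentiable_on_eq_differentiable_at)
  moreover have "C_k_on k U (\<lambda>x. frechet_derivative g (at x) i)" if "i \<in> Basis" for i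
    using Suc.IH[of "\<lambda>x. frechet_derivative f (at x) i"] Suc.prems that
      frechet_derivative_cong_open[OF assms(2), of _ f g]
    by auto
  ultimately show ?case by simp
qed

lemma C_k_on_const: "open U \<Longrightarrow> C_k_on k U (\<lambda>x. c)"
  by (induction k arbitrary: c) simp_all

lemma C_k_on_linear:
  assumes "bounded_linear L" "open U"
  shows "C_k_on k U f \<Longrightarrow> C_k_on k U (\<lambda>x. L (f x))"
proof (induction k arbitrary: f)
  case 0
  then show ?case using assms(1) by (simp add: bounded_linear.continuous_on)
next
  case (Suc k)
  have deriv: "((\<lambda>x. L (f x)) has_derivative (\<lambda>h. L (frechet_derivative f (at x) h))) (at x)"
    if "x \<in> U" for x
    using Suc.prems assms that
    by (auto simp: differentiable_on_eq_differentiable_at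
        intro!: bounded_linear.has_derivative[OF assms(1) has_frechet_derivative])
  then have "(\<lambda>x. L (f x)) differentiable_on U"
    using assms(2) by (auto simp: differentiable_on_eq_differentiable_at differentiable_def)
  moreover have "C_k_on k U (\<lambda>x. frechet_derivative (\<lambda>x. L (f x)) (at x) i)" if "i \<in> Basis" for i
  proof (rule C_k_on_cong[OF _ assms(2)])
    show "C_k_on k U (\<lambda>x. L (frechet_derivative f (at x) i))"
      using Suc that by simp
    show "L (frechet_derivative f (at x) i) = frechet_derivative (\<lambda>x. L (f x)) (at x) i"
      if "x \<in> U" for x
      using fun_cong[OF frechet_derivative_at[OF deriv[OF that]], of i] by simp
  qed
  ultimately show ?case by simp
qed

lemma C_k_on_add:
  assumes "open U"
  shows "C_k_on k U f \<Longrightarrow> C_k_on k U g \<Longrightarrow> C_k_on k U (\<lambda>x. f x + g x)"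
proof (induction k arbitrary: f g)
  case 0
  then show ?case by (simp add: continuous_on_add)
next
  case (Suc k)
  have deriv: "((\<lambda>x. f x + g x) has_derivative
      (\<lambda>h. frechet_derivative f (at x) h + frechet_derivative g (at x) h)) (at x)"
    if "x \<in> U" for x
    using Suc.prems assms that
    by (auto simp: differentiable_on_eq_differentiable_at
        intro!: has_derivative_add[OF has_frechet_derivative has_frechet_derivative])
  then have "(\<lambda>x. f x + g x) differentiable_on U"
    using assms by (auto simp: differentiable_on_eq_differentiable_at differentiable_def)
  moreover have "C_k_on k U (\<lambda>x. frechet_derivative (\<lambda>x. f x + g x) (at x) i)"
    if "i \<in> Basis" for i
  proof (rule C_k_on_cong[OF _ assms])
    show "C_k_on k U (\<lambda>x. frechet_derivative f (at x) i + frechet_derivative g (at x) i)"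
      using Suc that by simp
    show "frechet_derivative f (at x) i + frechet_derivative g (at x) i
        = frechet_derivative (\<lambda>x. f x + g x) (at x) i" if "x \<in> U" for x
      using fun_cong[OF frechet_derivative_at[OF deriv[OF that]], of i] by simp
  qed
  ultimately show ?case by simp
qed

lemma C_k_on_bilinear:
  assumes "bounded_bilinear P" "open U"
  shows "C_k_on k U f \<Longrightarrow> C_k_on k U g \<Longrightarrow> C_k_on k U (\<lambda>x. P (f x) (g x))"
proof (induction k arbitrary: f g)
  case 0
  then show ?case using bounded_bilinear.continuous_on[OF assms(1)] by simp
next
  case (Suc k)
  have deriv: "((\<lambda>x. P (f x) (g x)) has_derivative
      (\<lambda>h. P (f x) (frechet_derivative g (at x) h) + P (frechet_derivative f (at x) h) (g x))) (at x)"
    if "x \<in> U" for x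
    using Suc.prems assms that
    by (auto simp: differentiable_on_eq_differentiable_at
        intro!: bounded_bilinear.FDERIV[OF assms(1) has_frechet_derivative has_frechet_derivative])
  then have "(\<lambda>x. P (f x) (g x)) differentiable_on U"
    using assms(2) by (auto simp: differentiable_on_eq_differentiable_at differentiable_def)
  moreover have "C_k_on k U (\<lambda>x. frechet_derivative (\<lambda>x. P (f x) (g x)) (at x) i)"
    if "i \<in> Basis" for i
  proof (rule C_k_on_cong[OF _ assms(2)])
    have "C_k_on k U f" "C_k_on k U g"
      using Suc.prems C_k_on_SucD by blast+
    moreover have "C_k_on k U (\<lambda>x. frechet_derivative f (at x) i)"
      "C_k_on k U (\<lambda>x. frechet_derivative g (at x) i)"
      using Suc.prems that by simp_all
    ultimately show "C_k_on k U (\<lambda>x. P (f x) (frechet_derivative g (at x) i)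
        + P (frechet_derivative f (at x) i) (g x))"
      using Suc.IH by (intro C_k_on_add[OF assms(2)])
    show "P (f x) (frechet_derivative g (at x) i) + P (frechet_derivative f (at x) i) (g x)
        = frechet_derivative (\<lambda>x. P (f x) (g x)) (at x) i" if "x \<in> U" for x
      using fun_cong[OF frechet_derivative_at[OF deriv[OF that]], of i] by simp
  qed
  ultimately show ?case by simp
qed

lemma smooth_on_subset: "smooth_on U f \<Longrightarrow> V \<subseteq> U \<Longrightarrow> smooth_on V f"
  unfolding smooth_on_def using C_k_on_subset by blast

lemma smooth_on_const: "open U \<Longrightarrow> smooth_on U (\<lambda>x. c)"
  unfolding smooth_on_def using C_k_on_const by blast

lemma smooth_on_linear:
  "bounded_linear L \<Longrightarrow> open U \<Longrightarrow> smooth_on U f \<Longrightarrow> smooth_on U (\<lambda>x. L (f x))"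
  unfolding smooth_on_def using C_k_on_linear by blast

lemma smooth_on_add:
  "open U \<Longrightarrow> smooth_on U f \<Longrightarrow> smooth_on U g \<Longrightarrow> smooth_on U (\<lambda>x. f x + g x)"
  unfolding smooth_on_def using C_k_on_add by blast

lemma smooth_on_bilinear:
  "bounded_bilinear P \<Longrightarrow> open U \<Longrightarrow> smooth_on U f \<Longrightarrow> smooth_on U g
    \<Longrightarrow> smooth_on U (\<lambda>x. P (f x) (g x))"
  unfolding smooth_on_def using C_k_on_bilinear by blast

lemma smooth_on_diff:
  assumes "open U" "smooth_on U f" "smooth_on U g"
  shows "smooth_on U (\<lambda>x. f x - g x)"
  using smooth_on_add[OF assms(1,2) smooth_on_linear[OF bounded_linear_minus[OF bounded_linear_ident]
      assms(1,3)]]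
  by simp

lemma smooth_on_sum:
  assumes "open U" "finite S" "\<And>a. a \<in> S \<Longrightarrow> smooth_on U (h a)"
  shows "smooth_on U (\<lambda>x. \<Sum>a\<in>S. h a x)"
  using assms(2,3)
  by (induction S rule: finite_induct) (simp_all add: smooth_on_const smooth_on_add assms(1))

lemma smooth_on_vec_nth: "open U \<Longrightarrow> smooth_on U f \<Longrightarrow> smooth_on U (\<lambda>x. f x $ i)"
  using smooth_on_linear[OF bounded_linear_vec_nth] .

lemma bounded_linear_axis: "bounded_linear (axis i :: 'a::euclidean_space \<Rightarrow> 'a^'n)"
proof -
  have "linear (axis i :: 'a \<Rightarrow> 'a^'n)"
    by (auto simp: linear_iff axis_def vec_eq_iff)
  then show ?thesis by (simp add: linear_conv_bounded_linear)
qed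

lemma smooth_on_vec_lambda:
  fixes h :: "'i::finite \<Rightarrow> real^'n \<Rightarrow> 'a::euclidean_space"
  assumes "open U" "\<And>a. smooth_on U (h a)"
  shows "smooth_on U (\<lambda>x. \<chi> a. h a x)"
proof -
  have "(\<chi> a. h a x) = (\<Sum>a\<in>UNIV. axis a (h a x))" for x
    by (simp add: vec_eq_iff sum_component axis_def)
  moreover have "smooth_on U (\<lambda>x. \<Sum>a\<in>UNIV. axis a (h a x))"
    using assms by (intro smooth_on_sum smooth_on_linear[OF bounded_linear_axis]) simp_all
  ultimately show ?thesis by simp
qed

lemma bounded_bilinear_matrix_vector_mult: "bounded_bilinear (\<lambda>(M::real^'m^'n) v. M *v v)"
  by (auto simp: bilinear_conv_bounded_bilinear[symmetric] bilinear_def linear_iff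
      matrix_vector_right_distrib matrix_vector_mult_add_rdistrib
      matrix_vector_mult_scaleR scaleR_matrix_vector_assoc)

lemma smooth_on_pd:
  assumes "smooth_on U f"
  shows "smooth_on U (pd a f)"
proof -
  have "C_k_on k U (\<lambda>x. frechet_derivative f (at x) (axis a 1))" for k
    using assms[unfolded smooth_on_def, rule_format, of "Suc k"] by simp
  then show ?thesis unfolding smooth_on_def pd_def[abs_def] by blast
qed

lemma smooth_on_imp_differentiable:
  "smooth_on U f \<Longrightarrow> open U \<Longrightarrow> x \<in> U \<Longrightarrow> f differentiable at x"
  unfolding smooth_on_def
  by (metis C_k_on.simps(2) differentiable_on_eq_differentiable_at)

lemma smooth_on_imp_continuous_on: "smooth_on U f \<Longrightarrow> continuous_on U f"
  unfolding smooth_on_def by (metis C_k_on.simps(1))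

lemma pd_eq_has_derivative: "(f has_derivative f') (at x) \<Longrightarrow> pd a f x = f' (axis a 1)"
  unfolding pd_def by (metis frechet_derivative_at)

lemma pd_cong_open: "open W \<Longrightarrow> x \<in> W \<Longrightarrow> (\<And>z. z \<in> W \<Longrightarrow> f z = g z) \<Longrightarrow> pd a f x = pd a g x"
  unfolding pd_def using frechet_derivative_cong_open by metis

lemma pd_add:
  "f differentiable at x \<Longrightarrow> g differentiable at x \<Longrightarrow> pd a (\<lambda>y. f y + g y) x = pd a f x + pd a g x"
  by (subst pd_eq_has_derivative[OF has_derivative_add[OF has_frechet_derivative has_frechet_derivative]])
     (auto simp: pd_def)

lemma pd_diff:
  "f differentiable at x \<Longrightarrow> g differentiable at x \<Longrightarrow> pd a (\<lambda>y. f y - g y) x = pd a f x - pd a g x"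
  by (subst pd_eq_has_derivative[OF has_derivative_diff[OF has_frechet_derivative has_frechet_derivative]])
     (auto simp: pd_def)

lemma pd_bilinear:
  "bounded_bilinear P \<Longrightarrow> f differentiable at x \<Longrightarrow> g differentiable at x \<Longrightarrow>
    pd a (\<lambda>y. P (f y) (g y)) x = P (f x) (pd a g x) + P (pd a f x) (g x)"
  by (subst pd_eq_has_derivative[OF bounded_bilinear.FDERIV[OF _ has_frechet_derivative has_frechet_derivative]])
     (auto simp: pd_def)

lemma pd_const: "pd a (\<lambda>y. c) x = 0"
  by (simp add: pd_def)

section \<open>Symmetry of second partial derivatives\<close>

lemma has_vector_derivative_along_line:
  assumes "h differentiable at (p + s *\<^sub>R d)"
  shows "((\<lambda>s. h (p + s *\<^sub>R d)) has_vector_derivative frechet_derivative h (at (p + s *\<^sub>R d)) d) (at s)"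
proof -
  have "((\<lambda>s. p + s *\<^sub>R d) has_derivative (\<lambda>r. r *\<^sub>R d)) (at s)"
    by (auto intro!: derivative_eq_intros)
  from has_derivative_compose[OF this has_frechet_derivative[OF assms]]
  show ?thesis
    unfolding has_vector_derivative_def o_def
    using linear_scale[OF linear_frechet_derivative[OF assms]] by simp
qed

lemma increment_minus_linear_bound:
  fixes h :: "real \<Rightarrow> 'b::real_normed_vector"
  assumes "0 \<le> t"
    and deriv: "\<And>u. 0 \<le> u \<Longrightarrow> u \<le> t \<Longrightarrow> (h has_vector_derivative h' u) (at u)"
    and bound: "\<And>u. 0 \<le> u \<Longrightarrow> u \<le> t \<Longrightarrow> norm (h' u - c) \<le> B"
  shows "norm (h t - h 0 - t *\<^sub>R c) \<le> t * B"
proof (cases "t = 0")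
  case False
  then have "0 < t" using assms(1) by simp
  define g where "g u = h u - u *\<^sub>R c" for u
  have g': "(g has_vector_derivative (h' u - c)) (at u)" if "0 \<le> u" "u \<le> t" for u
    unfolding g_def using deriv[OF that] by (auto intro!: derivative_eq_intros)
  then have "continuous_on {0..t} g"
    by (intro continuous_at_imp_continuous_on ballI has_vector_derivative_continuous) auto
  moreover have "continuous_on {0..t} (\<lambda>u. u * B)"
    by (intro continuous_intros)
  moreover have "((\<lambda>u. u * B) has_vector_derivative B) (at u)" for u
    by (auto simp: has_vector_derivative_def intro!: derivative_eq_intros)
  ultimately have "norm (g t - g 0) \<le> t * B - 0 * B"
    using differentiable_bound_general[OF \<open>0 < t\<close>, of g "\<lambda>u. u * B" "\<lambda>u. h' u - c" "\<lambda>_. B"]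
      g' bound
    by auto
  then show ?thesis by (simp add: g_def algebra_simps)
qed simp

definition second_difference :: "(real^'n \<Rightarrow> 'b::real_normed_vector) \<Rightarrow> real^'n \<Rightarrow> 'n \<Rightarrow> 'n \<Rightarrow> real \<Rightarrow> 'b"
  where "second_difference f x a b t =
    f (x + t *\<^sub>R axis a 1 + t *\<^sub>R axis b 1) - f (x + t *\<^sub>R axis a 1) - f (x + t *\<^sub>R axis b 1) + f x"

lemma second_difference_commute: "second_difference f x a b t = second_difference f x b a t"
  by (simp add: second_difference_def algebra_simps)

text \<open>The mean value bound is applied twice: along \<open>ea\<close> to \<open>pd b f\<close>, then along \<open>eb\<close> to
  \<open>v \<mapsto> f (x + t ea + v eb) - f (x + v eb)\<close>.\<close>

lemma second_difference_bound:
  fixes f :: "real^'n \<Rightarrow> 'b::real_normed_vector" and a b :: 'n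
  defines "ea \<equiv> axis a 1 :: real^'n" and "eb \<equiv> axis b 1 :: real^'n"
  assumes "0 \<le> t"
    and rect: "\<And>u v. 0 \<le> u \<Longrightarrow> u \<le> t \<Longrightarrow> 0 \<le> v \<Longrightarrow> v \<le> t \<Longrightarrow>
      x + u *\<^sub>R ea + v *\<^sub>R eb \<in> W \<and> norm (pd a (pd b f) (x + u *\<^sub>R ea + v *\<^sub>R eb) - c) \<le> e"
    and f': "\<And>z. z \<in> W \<Longrightarrow> f differentiable at z"
    and f'': "\<And>z. z \<in> W \<Longrightarrow> pd b f differentiable at z"
  shows "norm (second_difference f x a b t - (t * t) *\<^sub>R c) \<le> t * (t * e)"
proof -
  have inner: "norm (pd b f (x + t *\<^sub>R ea + v *\<^sub>R eb) - pd b f (x + v *\<^sub>R eb) - t *\<^sub>R c) \<le> t * e"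
    if v: "0 \<le> v" "v \<le> t" for v
  proof -
    have shift: "x + v *\<^sub>R eb + u *\<^sub>R ea = x + u *\<^sub>R ea + v *\<^sub>R eb" for u
      by (simp add: algebra_simps)
    have "norm (pd b f (x + v *\<^sub>R eb + t *\<^sub>R ea) - pd b f (x + v *\<^sub>R eb + 0 *\<^sub>R ea) - t *\<^sub>R c) \<le> t * e"
    proof (rule increment_minus_linear_bound[OF \<open>0 \<le> t\<close>])
      fix u assume u: "0 \<le> u" "u \<le> t"
      have "pd b f differentiable at (x + v *\<^sub>R eb + u *\<^sub>R ea)"
        using f'' rect[OF u v] by (simp add: shift)
      from has_vector_derivative_along_line[OF this]
      show "((\<lambda>s. pd b f (x + v *\<^sub>R eb + s *\<^sub>R ea)) has_vector_derivative
          pd a (pd b f) (x + v *\<^sub>R eb + u *\<^sub>R ea)) (at u)"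
        by (simp add: pd_def[of a "pd b f"] ea_def)
      show "norm (pd a (pd b f) (x + v *\<^sub>R eb + u *\<^sub>R ea) - c) \<le> e"
        using rect[OF u v] by (simp add: shift)
    qed
    then show ?thesis by (simp add: shift)
  qed
  define k where "k v = f (x + t *\<^sub>R ea + v *\<^sub>R eb) - f (x + v *\<^sub>R eb)" for v
  have "norm (k t - k 0 - t *\<^sub>R (t *\<^sub>R c)) \<le> t * (t * e)"
  proof (rule increment_minus_linear_bound[OF \<open>0 \<le> t\<close> _ inner])
    fix v assume v: "0 \<le> v" "v \<le> t"
    have "x + t *\<^sub>R ea + v *\<^sub>R eb \<in> W" "x + v *\<^sub>R eb \<in> W"
      using rect[OF \<open>0 \<le> t\<close> order_refl v] rect[OF order_refl \<open>0 \<le> t\<close> v] by simp_all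
    then show "(k has_vector_derivative
        pd b f (x + t *\<^sub>R ea + v *\<^sub>R eb) - pd b f (x + v *\<^sub>R eb)) (at v)"
      unfolding k_def[abs_def] pd_def eb_def
      by (intro has_vector_derivative_diff has_vector_derivative_along_line f')
  qed
  then show ?thesis
    by (simp add: k_def second_difference_def ea_def eb_def algebra_simps)
qed

lemma second_difference_approx:
  fixes f :: "real^'n \<Rightarrow> 'b::real_normed_vector"
  assumes "open W" "x \<in> W"
    and f': "\<And>z. z \<in> W \<Longrightarrow> f differentiable at z"
    and f'': "\<And>z. z \<in> W \<Longrightarrow> pd b f differentiable at z"
    and cont: "continuous_on W (pd a (pd b f))"
    and "e > 0"
  shows "\<exists>\<delta>>0. \<forall>t. 0 < t \<and> t < \<delta> \<longrightarrow>
    norm (second_difference f x a b t - (t * t) *\<^sub>R pd a (pd b f) x) \<le> t * (t * e)"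
proof -
  obtain r1 where "r1 > 0" and r1: "\<And>z. z \<in> W \<Longrightarrow> dist z x < r1 \<Longrightarrow>
      dist (pd a (pd b f) z) (pd a (pd b f) x) < e"
    using cont \<open>x \<in> W\<close> \<open>e > 0\<close> unfolding continuous_on_iff by blast
  obtain r2 where "r2 > 0" and r2: "ball x r2 \<subseteq> W"
    using \<open>open W\<close> \<open>x \<in> W\<close> open_contains_ball by blast
  define r where "r = min r1 r2"
  have near: "z \<in> W \<and> norm (pd a (pd b f) z - pd a (pd b f) x) \<le> e" if "dist z x < r" for z
  proof
    show "z \<in> W" using that r2 by (auto simp: r_def dist_commute)
    then show "norm (pd a (pd b f) z - pd a (pd b f) x) \<le> e"
      using r1[of z] that by (auto simp: r_def dist_norm)
  qed
  show ?thesis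
  proof (intro exI[of _ "r / 2"] conjI allI impI)
    show "0 < r / 2" using \<open>r1 > 0\<close> \<open>r2 > 0\<close> by (simp add: r_def)
    fix t assume t: "0 < t \<and> t < r / 2"
    have "dist (x + u *\<^sub>R axis a 1 + v *\<^sub>R axis b 1) x < r"
      if "0 \<le> u" "u \<le> t" "0 \<le> v" "v \<le> t" for u v
    proof -
      have "dist (x + u *\<^sub>R axis a 1 + v *\<^sub>R axis b 1) x
          = norm (u *\<^sub>R axis a (1::real) + v *\<^sub>R axis b 1)"
        by (simp add: dist_norm)
      also have "\<dots> \<le> norm (u *\<^sub>R axis a (1::real)) + norm (v *\<^sub>R axis b (1::real))"
        by (rule norm_triangle_ineq)
      also have "\<dots> = u + v"
        using that by simp
      finally show ?thesis using that t by simp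
    qed
    with near show "norm (second_difference f x a b t - (t * t) *\<^sub>R pd a (pd b f) x) \<le> t * (t * e)"
      using t by (intro second_difference_bound f' f'') auto
  qed
qed

text \<open>Both mixed partials are the limit of \<open>second_difference f x a b t / t\<^sup>2\<close>, which is
  symmetric in \<open>a\<close> and \<open>b\<close>.\<close>

lemma pd_commute:
  fixes f :: "real^'n \<Rightarrow> 'b::real_normed_vector"
  assumes "open W" "x \<in> W"
    and f': "\<And>z. z \<in> W \<Longrightarrow> f differentiable at z"
    and "\<And>z. z \<in> W \<Longrightarrow> pd a f differentiable at z" "\<And>z. z \<in> W \<Longrightarrow> pd b f differentiable at z"
    and "continuous_on W (pd a (pd b f))" "continuous_on W (pd b (pd a f))"
  shows "pd a (pd b f) x = pd b (pd a f) x"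
proof -
  let ?z = "pd a (pd b f) x - pd b (pd a f) x"
  have "norm ?z \<le> 0 + e" if "e > 0" for e
  proof -
    obtain \<delta>1 where "\<delta>1 > 0" and \<delta>1: "\<And>t. 0 < t \<Longrightarrow> t < \<delta>1 \<Longrightarrow>
        norm (second_difference f x a b t - (t * t) *\<^sub>R pd a (pd b f) x) \<le> t * (t * (e / 2))"
      using second_difference_approx[OF assms(1-3,5,6) half_gt_zero[OF \<open>e > 0\<close>]] by blast
    obtain \<delta>2 where "\<delta>2 > 0" and \<delta>2: "\<And>t. 0 < t \<Longrightarrow> t < \<delta>2 \<Longrightarrow>
        norm (second_difference f x a b t - (t * t) *\<^sub>R pd b (pd a f) x) \<le> t * (t * (e / 2))"
      using second_difference_approx[OF assms(1-4,7) half_gt_zero[OF \<open>e > 0\<close>]]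
      unfolding second_difference_commute[of f x b a] by blast
    define t where "t = min \<delta>1 \<delta>2 / 2"
    have t: "0 < t" "t < \<delta>1" "t < \<delta>2"
      using \<open>\<delta>1 > 0\<close> \<open>\<delta>2 > 0\<close> by (auto simp: t_def)
    have "(t * t) *\<^sub>R ?z = (second_difference f x a b t - (t * t) *\<^sub>R pd b (pd a f) x)
        - (second_difference f x a b t - (t * t) *\<^sub>R pd a (pd b f) x)"
      by (simp add: algebra_simps)
    then have "norm ((t * t) *\<^sub>R ?z)
        \<le> norm (second_difference f x a b t - (t * t) *\<^sub>R pd b (pd a f) x)
          + norm (second_difference f x a b t - (t * t) *\<^sub>R pd a (pd b f) x)"
      by (metis norm_triangle_ineq4)
    also have "\<dots> \<le> t * (t * (e / 2)) + t * (t * (e / 2))"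
      using \<delta>1[OF t(1,2)] \<delta>2[OF t(1,3)] by (rule add_mono[rotated])
    also have "\<dots> = (t * t) * e"
      by (simp add: field_simps)
    finally have "(t * t) * norm ?z \<le> (t * t) * e"
      using t by simp
    then show ?thesis using t by simp
  qed
  then have "norm ?z \<le> 0" by (rule field_le_epsilon)
  then show ?thesis by simp
qed

lemma smooth_on_pd_commute:
  assumes "smooth_on W f" "open W" "x \<in> W"
  shows "pd a (pd b f) x = pd b (pd a f) x"
  using assms
  by (intro pd_commute smooth_on_imp_differentiable smooth_on_imp_continuous_on smooth_on_pd)
    auto

section \<open>Covariant derivative and curvature\<close>

lemma covd_nth: "covd G \<sigma> x $ a = pd a \<sigma> x + G x $ a *v \<sigma> x"
  by (simp add: covd_def)

lemma extd_nth:
  "extd G \<phi> x $ a $ b = (1/2) *\<^sub>R ((pd a (\<lambda>y. \<phi> y $ b) x + G x $ a *v (\<phi> x $ b))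
    - (pd b (\<lambda>y. \<phi> y $ a) x + G x $ b *v (\<phi> x $ a)))"
  by (simp add: extd_def)

lemma extd_nth_covd: "extd G \<phi> x $ a $ b = (1/2) *\<^sub>R
    (covd G (\<lambda>y. \<phi> y $ b) x $ a - covd G (\<lambda>y. \<phi> y $ a) x $ b)"
  by (simp add: extd_nth covd_nth)

lemma smooth_on_covd:
  assumes "open U" "smooth_on U G" "smooth_on U \<eta>"
  shows "smooth_on U (covd G \<eta>)"
  unfolding covd_def[abs_def] using assms
  by (intro smooth_on_vec_lambda smooth_on_add smooth_on_pd smooth_on_vec_nth
      smooth_on_bilinear[OF bounded_bilinear_matrix_vector_mult])

lemma covd_add:
  "f differentiable at x \<Longrightarrow> g differentiable at x \<Longrightarrow>
    covd G (\<lambda>y. f y + g y) x = covd G f x + covd G g x"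
  by (simp add: vec_eq_iff covd_nth pd_add matrix_vector_right_distrib)

lemma covd_diff:
  "f differentiable at x \<Longrightarrow> g differentiable at x \<Longrightarrow>
    covd G (\<lambda>y. f y - g y) x = covd G f x - covd G g x"
  by (simp add: vec_eq_iff covd_nth pd_diff matrix_vector_mult_diff_distrib)

lemma extd_diff:
  assumes "open W" "x \<in> W" "smooth_on W \<phi>" "smooth_on W \<psi>"
  shows "extd G (\<lambda>y. \<phi> y - \<psi> y) x = extd G \<phi> x - extd G \<psi> x"
proof -
  have "(\<lambda>y. \<phi> y $ b) differentiable at x" "(\<lambda>y. \<psi> y $ b) differentiable at x" for b
    using assms smooth_on_imp_differentiable smooth_on_vec_nth by blast+
  moreover have "(\<lambda>y. (\<phi> y - \<psi> y) $ b) = (\<lambda>y. \<phi> y $ b - \<psi> y $ b)" for b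
    by simp
  ultimately show ?thesis
    by (simp add: vec_eq_iff extd_nth pd_diff matrix_vector_mult_diff_distrib algebra_simps)
qed

lemma extd_cong_open:
  assumes "open W" "x \<in> W" "\<And>y. y \<in> W \<Longrightarrow> \<phi> y = \<psi> y"
  shows "extd G \<phi> x = extd G \<psi> x"
proof -
  have "pd c (\<lambda>y. \<phi> y $ b) x = pd c (\<lambda>y. \<psi> y $ b) x" for b c
    using assms by (intro pd_cong_open[OF assms(1,2)]) simp
  then show ?thesis by (simp add: extd_def assms(3)[OF assms(2)])
qed

lemma curv_nth:
  fixes G :: "real^'n \<Rightarrow> real^'k^'k^'n"
  assumes G': "G differentiable at x" and "\<sigma> differentiable at x" "\<And>c. pd c \<sigma> differentiable at x"
  shows "curv G \<sigma> x $ a $ b = (1/2) *\<^sub>R ((pd a (pd b \<sigma>) x - pd b (pd a \<sigma>) x)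
    + (pd a (\<lambda>y. G y $ b) x *v \<sigma> x + G x $ a *v (G x $ b *v \<sigma> x))
    - (pd b (\<lambda>y. G y $ a) x *v \<sigma> x + G x $ b *v (G x $ a *v \<sigma> x)))"
proof -
  have G'_nth: "(\<lambda>y. G y $ c) differentiable at x" for c
    using differentiableI[OF bounded_linear.has_derivative[OF bounded_linear_vec_nth has_frechet_derivative[OF G']]]
    by blast
  have "(\<lambda>y. G y $ d *v \<sigma> y) differentiable at x" for d
    using differentiableI[OF bounded_bilinear.FDERIV[OF bounded_bilinear_matrix_vector_mult
        has_frechet_derivative[OF G'_nth] has_frechet_derivative[OF assms(2)]]]
    by blast
  then have "pd c (\<lambda>y. covd G \<sigma> y $ d) x
      = pd c (pd d \<sigma>) x + (G x $ d *v pd c \<sigma> x + pd c (\<lambda>y. G y $ d) x *v \<sigma> x)" for c d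
    using assms G'_nth
    by (simp add: covd_nth pd_add pd_bilinear[OF bounded_bilinear_matrix_vector_mult])
  then show ?thesis
    by (simp add: curv_def extd_nth covd_nth matrix_vector_right_distrib algebra_simps)
qed

lemma curv_eq_curv_at:
  fixes G :: "real^'n \<Rightarrow> real^'k^'k^'n"
  assumes "open W" "x \<in> W" "smooth_on W \<sigma>" "G differentiable at x"
  shows "curv G \<sigma> x = curv_at G x (\<sigma> x)"
proof -
  have \<sigma>': "\<sigma> differentiable at x" "\<And>c. pd c \<sigma> differentiable at x"
    using assms smooth_on_imp_differentiable smooth_on_pd by blast+
  have const: "pd c (\<lambda>_. \<sigma> x) = (\<lambda>_. 0)" for c
    by (simp add: fun_eq_iff pd_const)
  have const': "(\<lambda>_. \<sigma> x) differentiable at x" "\<And>c. pd c (\<lambda>_. \<sigma> x) differentiable at x"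
    unfolding const by simp_all
  show ?thesis
    unfolding curv_at_def vec_eq_iff curv_nth[OF assms(4) \<sigma>'] curv_nth[OF assms(4) const']
    by (simp add: const pd_const smooth_on_pd_commute[OF assms(3,1,2)])
qed

lemma curv_diff:
  assumes "open W" "x \<in> W" "smooth_on W G" "smooth_on W \<sigma>" "smooth_on W \<tau>"
  shows "curv G (\<lambda>y. \<sigma> y - \<tau> y) x = curv G \<sigma> x - curv G \<tau> x"
proof -
  have "covd G (\<lambda>y. \<sigma> y - \<tau> y) y = covd G \<sigma> y - covd G \<tau> y" if "y \<in> W" for y
    using assms(1,4,5) that by (blast intro: covd_diff smooth_on_imp_differentiable)
  then have "extd G (covd G (\<lambda>y. \<sigma> y - \<tau> y)) x = extd G (\<lambda>y. covd G \<sigma> y - covd G \<tau> y) x"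
    by (rule extd_cong_open[OF assms(1,2)])
  also have "\<dots> = extd G (covd G \<sigma>) x - extd G (covd G \<tau>) x"
    using assms by (intro extd_diff smooth_on_covd)
  finally show ?thesis by (simp add: curv_def)
qed

section \<open>Parallel subbundles\<close>

lemma subbundle_on_subspace: "subbundle_on U F \<Longrightarrow> x \<in> U \<Longrightarrow> subspace (F x)"
  by (simp add: subbundle_on_def)

lemma extd_mem_parallel:
  assumes "parallel_on U G F" "subbundle_on U F"
    and "open W" "W \<subseteq> U" "smooth_on W \<phi>" "\<And>y b. y \<in> W \<Longrightarrow> \<phi> y $ b \<in> F y" "x \<in> W"
  shows "extd G \<phi> x $ a $ b \<in> F x"
proof -
  have "covd G (\<lambda>y. \<phi> y $ d) x $ c \<in> F x" for c d
    using assms smooth_on_vec_nth[OF assms(3,5)] unfolding parallel_on_def by blast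
  then show ?thesis
    unfolding extd_nth_covd
    using subbundle_on_subspace[OF assms(2)] assms(4,7)
    by (intro subspace_scale subspace_diff) auto
qed

lemma mem_subbundle_if_curv_eq_extd:
  assumes "quot_curv_injective_on U G F" "parallel_on U G F" "subbundle_on U F"
    and "open W" "W \<subseteq> U" "smooth_on W G" "smooth_on W \<phi>" "smooth_on W \<psi>"
    and "\<And>y b. y \<in> W \<Longrightarrow> \<phi> y $ b \<in> F y" "\<And>y. y \<in> W \<Longrightarrow> extd G \<phi> y = curv G \<psi> y"
    and "x \<in> W"
  shows "\<psi> x \<in> F x"
proof -
  have "curv_at G x (\<psi> x) = extd G \<phi> x"
    using curv_eq_curv_at[OF assms(4,11,8) smooth_on_imp_differentiable[OF assms(6,4,11)]] assms(10,11)
    by simp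
  moreover have "extd G \<phi> x $ a $ b \<in> F x" for a b
    by (rule extd_mem_parallel[OF assms(2-5,7,9,11)])
  ultimately have "curv_at G x (\<psi> x) $ a $ b \<in> F x" for a b
    by simp
  then show ?thesis
    using assms(1,5,11) unfolding quot_curv_injective_on_def by blast
qed

lemma extd_eq_curv_descends_to_subbundle:
  assumes "quot_curv_injective_on U G F" "parallel_on U G F" "subbundle_on U F"
    and "open W" "W \<subseteq> U" "smooth_on W G" "smooth_on W \<phi>" "smooth_on W \<psi>" "smooth_on W \<eta>"
    and eq: "\<And>y. y \<in> W \<Longrightarrow> extd G \<phi> y = curv G \<psi> y"
    and mod_F: "\<And>y a. y \<in> W \<Longrightarrow> covd G \<eta> y $ a - \<phi> y $ a \<in> F y"
  defines "\<phi>' \<equiv> \<lambda>y. \<phi> y - covd G \<eta> y" and "\<psi>' \<equiv> \<lambda>y. \<psi> y - \<eta> y"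
  shows "smooth_on W \<phi>'" "smooth_on W \<psi>'" "\<And>y b. y \<in> W \<Longrightarrow> \<phi>' y $ b \<in> F y"
    and "\<And>y. y \<in> W \<Longrightarrow> \<psi>' y \<in> F y" "\<And>y. y \<in> W \<Longrightarrow> extd G \<phi>' y = curv G \<psi>' y"
proof -
  show \<phi>': "smooth_on W \<phi>'" "smooth_on W \<psi>'"
    unfolding \<phi>'_def \<psi>'_def using assms by (auto intro: smooth_on_diff smooth_on_covd)
  show \<phi>'_F: "\<phi>' y $ b \<in> F y" if "y \<in> W" for y b
    using subspace_neg[OF subbundle_on_subspace[OF assms(3)] mod_F] that assms(5)
    by (force simp: \<phi>'_def)
  show eq': "extd G \<phi>' y = curv G \<psi>' y" if "y \<in> W" for y
  proof -
    have "extd G \<phi>' y = extd G \<phi> y - curv G \<eta> y"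
      unfolding \<phi>'_def curv_def using assms that by (intro extd_diff smooth_on_covd)
    also have "\<dots> = curv G \<psi>' y"
      unfolding \<psi>'_def using assms that by (simp add: curv_diff)
    finally show ?thesis .
  qed
  show "\<psi>' y \<in> F y" if "y \<in> W" for y
    using assms(1-6) \<phi>' \<phi>'_F eq' that by (rule mem_subbundle_if_curv_eq_extd)
qed

lemma exact_quot_onE:
  assumes "exact_quot_on U G F" "open V" "V \<subseteq> U" "smooth_on V \<phi>" "smooth_on V \<psi>"
    and "\<And>y a b. y \<in> V \<Longrightarrow> extd G \<phi> y $ a $ b - curv G \<psi> y $ a $ b \<in> F y" "x \<in> V"
  obtains W \<eta> where "open W" "x \<in> W" "W \<subseteq> V" "smooth_on W \<eta>"
    "\<And>y a. y \<in> W \<Longrightarrow> covd G \<eta> y $ a - \<phi> y $ a \<in> F y"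
proof -
  have "open V \<and> V \<subseteq> U \<and> smooth_on V \<phi> \<and> smooth_on V \<psi> \<and>
      (\<forall>y\<in>V. \<forall>a b. extd G \<phi> y $ a $ b - curv G \<psi> y $ a $ b \<in> F y)"
    using assms(2-6) by auto
  then have "\<forall>x\<in>V. \<exists>W \<eta>. open W \<and> x \<in> W \<and> W \<subseteq> V \<and> smooth_on W \<eta> \<and>
      (\<forall>y\<in>W. \<forall>a. covd G \<eta> y $ a - \<phi> y $ a \<in> F y)"
    by (rule assms(1)[unfolded exact_quot_on_def, THEN spec, THEN spec, THEN spec, THEN mp])
  then obtain W \<eta> where "open W" "x \<in> W" "W \<subseteq> V" "smooth_on W \<eta>"
    "\<forall>y\<in>W. \<forall>a. covd G \<eta> y $ a - \<phi> y $ a \<in> F y"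
    using \<open>x \<in> V\<close> by auto
  then show thesis by (intro that) auto
qed

lemma exact_sub_onE:
  assumes "exact_sub_on U G F" "open V" "V \<subseteq> U" "smooth_on V \<phi>" "smooth_on V \<psi>"
    and "\<And>y b. y \<in> V \<Longrightarrow> \<phi> y $ b \<in> F y" "\<And>y. y \<in> V \<Longrightarrow> \<psi> y \<in> F y"
    and "\<And>y. y \<in> V \<Longrightarrow> extd G \<phi> y = curv G \<psi> y" "x \<in> V"
  obtains W \<eta> where "open W" "x \<in> W" "W \<subseteq> V" "smooth_on W \<eta>"
    "\<And>y. y \<in> W \<Longrightarrow> covd G \<eta> y = \<phi> y"
proof -
  have "open V \<and> V \<subseteq> U \<and> smooth_on V \<phi> \<and> smooth_on V \<psi> \<and> (\<forall>y\<in>V. \<forall>b. \<phi> y $ b \<in> F y) \<and>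
      (\<forall>y\<in>V. \<psi> y \<in> F y) \<and> (\<forall>y\<in>V. extd G \<phi> y = curv G \<psi> y)"
    using assms(2-8) by auto
  then have "\<forall>x\<in>V. \<exists>W \<eta>. open W \<and> x \<in> W \<and> W \<subseteq> V \<and> smooth_on W \<eta> \<and>
      (\<forall>y\<in>W. \<eta> y \<in> F y) \<and> (\<forall>y\<in>W. covd G \<eta> y = \<phi> y)"
    by (rule assms(1)[unfolded exact_sub_on_def, THEN spec, THEN spec, THEN spec, THEN mp])
  then obtain W \<eta> where "open W" "x \<in> W" "W \<subseteq> V" "smooth_on W \<eta>"
    "\<forall>y\<in>W. covd G \<eta> y = \<phi> y"
    using \<open>x \<in> V\<close> by auto
  then show thesis by (intro that) auto
qed

theorem proposition2p8:
  fixes U :: "(real^'n) set"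
    and G :: "real^'n \<Rightarrow> real^'k^'k^'n"
    and F :: "real^'n \<Rightarrow> (real^'k) set"
  assumes "open U"
    and "connection_on U G"
    and "curv_const_rank U G"
    and "subbundle_on U F"
    and "parallel_on U G F"
    and "sub_curv_const_rank U G F"
    and "exact_sub_on U G F"
    and "exact_quot_on U G F"
    and "quot_curv_injective_on U G F"
  shows "exact_on U G"
  unfolding exact_on_def
proof (intro allI impI ballI)
  fix V \<phi> \<psi> x
  assume "open V \<and> V \<subseteq> U \<and> smooth_on V \<phi> \<and> smooth_on V \<psi> \<and> (\<forall>y\<in>V. extd G \<phi> y = curv G \<psi> y)"
    and "x \<in> V"
  then have V: "open V" "V \<subseteq> U" "smooth_on V \<phi>" "smooth_on V \<psi>"
    and eq: "\<And>y. y \<in> V \<Longrightarrow> extd G \<phi> y = curv G \<psi> y" by auto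
  have quot_eq: "extd G \<phi> y $ a $ b - curv G \<psi> y $ a $ b \<in> F y" if "y \<in> V" for y a b
    using eq[OF that] V(2) that subbundle_on_subspace[OF assms(4)] by (auto intro: subspace_0)
  obtain W \<eta> where W: "open W" "x \<in> W" "W \<subseteq> V" "smooth_on W \<eta>"
    and mod_F: "\<And>y a. y \<in> W \<Longrightarrow> covd G \<eta> y $ a - \<phi> y $ a \<in> F y"
    using exact_quot_onE[OF assms(8) V(1-4) quot_eq \<open>x \<in> V\<close>] by blast
  have "W \<subseteq> U" using W(3) V(2) by (rule order_trans)
  have "smooth_on W G"
    using assms(2) \<open>W \<subseteq> U\<close> unfolding connection_on_def by (rule smooth_on_subset)
  note correction = extd_eq_curv_descends_to_subbundle[OF assms(9,5,4) W(1) \<open>W \<subseteq> U\<close> this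
      smooth_on_subset[OF V(3) W(3)] smooth_on_subset[OF V(4) W(3)] W(4) eq[OF subsetD[OF W(3)]] mod_F]
  obtain W' \<eta>' where W': "open W'" "x \<in> W'" "W' \<subseteq> W" "smooth_on W' \<eta>'"
    and \<eta>': "\<And>y. y \<in> W' \<Longrightarrow> covd G \<eta>' y = \<phi> y - covd G \<eta> y"
    using exact_sub_onE[OF assms(7) W(1) \<open>W \<subseteq> U\<close> correction W(2)] by blast
  show "\<exists>W \<eta>. open W \<and> x \<in> W \<and> W \<subseteq> V \<and> smooth_on W \<eta> \<and> (\<forall>y\<in>W. covd G \<eta> y = \<phi> y)"
  proof (intro exI conjI ballI)
    show "open W'" "x \<in> W'" "W' \<subseteq> V" "smooth_on W' (\<lambda>y. \<eta> y + \<eta>' y)"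
      using W W' smooth_on_add[OF W'(1) smooth_on_subset[OF W(4) W'(3)] W'(4)] by auto
    show "covd G (\<lambda>y. \<eta> y + \<eta>' y) y = \<phi> y" if "y \<in> W'" for y
    proof -
      have "\<eta> differentiable at y" "\<eta>' differentiable at y"
        using smooth_on_imp_differentiable[OF W(4,1) subsetD[OF W'(3) that]]
          smooth_on_imp_differentiable[OF W'(4,1) that] .
      then show ?thesis using \<eta>'[OF that] by (simp add: covd_add)
    qed
  qed
qed

end
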